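(* Fix $0<a<2$. For every $p\in\mathbb N$ with $p<(4/a)-1$ and every $0<r<\infty$, $$W(p,r):=\int_{\mathbb B(0,r)^p}f(z_1,\dots,z_p)\,dz_1\cdots dz_p<\infty,$$ where $f(w_1,\dots,w_q)=\prod_{j=1}^q\|w_j\|^{-a}\prod_{1\le j<k\le q}\|w_j-w_k\|^{-a}$.
   Context: Here $w_j,z_j\in\mathbb R^2$, $\|(t,x)\|=|t|+|x|$ on $\mathbb R^2$, $\mathbb B(0,r)=\{w\in\mathbb R^2:\|w\|<r\}$, and $\mathbb B(0,r)^p\subset\mathbb R^{2p}$ with Lebesgue measure. *)

theory Defs
  imports "HOL-Analysis.Analysis"
begin

definition l1n :: "real \<times> real \<Rightarrow> real" where
  "l1n w = \<bar>fst w\<bar> + \<bar>snd w\<bar>"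

definition l1ball :: "real \<Rightarrow> (real \<times> real) set" where
  "l1ball r = {w. l1n w < r}"

definition fker :: "real \<Rightarrow> nat \<Rightarrow> (nat \<Rightarrow> real \<times> real) \<Rightarrow> real" where
  "fker a q w = (\<Prod>j<q. l1n (w j) powr (-a)) *
                 (\<Prod>j<q. \<Prod>k\<in>{j<..<q}. l1n (w j - w k) powr (-a))"

end

theory Submission
  imports Defs
begin

(* Write F = f(z_1,...,z_p) and b = a(p+1)/2, so b < 2. Every factor of F occurs in exactly two of
   the p + 1 "star" products S_0 = prod_j |z_j|^-b and S_i = |z_i|^-b prod_(j ~= i) |z_i - z_j|^-b,
   whence F^(p+1) = S_0 S_1 ... S_p and F <= S_0 + ... + S_p. Each star product is integrable on B(0,r)^p:
   S_0 is a product of integrals of |w|^-b over B(0,r), and in S_i the integrals over the z_j with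
   j ~= i are translates of |w|^-b, bounded by its integral over B(0,2r). Finally |w|^-b is integrable
   on a planar ball because (|s| + |t|)^-b <= |s|^(-b/2) |t|^(-b/2) and b/2 < 1. *)

lemma le_sum_if_power_card_eq_prod:
  fixes x :: "'a \<Rightarrow> real"
  assumes "finite I" "I \<noteq> {}" "\<And>i. i \<in> I \<Longrightarrow> 0 \<le> x i"
    and "0 \<le> F" and F: "F ^ card I = (\<Prod>i\<in>I. x i)"
  shows "F \<le> (\<Sum>i\<in>I. x i)"
proof -
  have "(\<Prod>i\<in>I. x i) \<le> (\<Prod>i\<in>I. \<Sum>k\<in>I. x k)"
    using assms by (intro prod_mono) (auto intro: member_le_sum)
  then have "F ^ card I \<le> (\<Sum>i\<in>I. x i) ^ card I"
    by (simp add: F)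
  moreover have "0 \<le> (\<Sum>i\<in>I. x i)" "card I > 0"
    using assms by (auto intro: sum_nonneg simp: card_gt_0_iff)
  ultimately show ?thesis
    using power_mono_iff \<open>0 \<le> F\<close> by blast
qed

lemma prod_lessThan_triangle_swap:
  "(\<Prod>i<(p::nat). \<Prod>j<i. h i j) = (\<Prod>j<p. \<Prod>i\<in>{j<..<p}. h i j :: 'a :: comm_monoid_mult)"
proof (cases p)
  case (Suc n)
  have "(\<Prod>i<Suc n. \<Prod>j<i. h i j) = (\<Prod>j<n. \<Prod>i\<in>{Suc j..n}. h i j)"
    using prod.nested_swap'[of h n] by (simp add: lessThan_Suc_atMost)
  also have "\<dots> = (\<Prod>j<Suc n. \<Prod>i\<in>{j<..<Suc n}. h i j)"
  proof -
    have "{Suc j..n} = {j<..<Suc n}" for j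
      by auto
    moreover have "{n<..<Suc n} = {}"
      by auto
    ultimately show ?thesis
      by simp
  qed
  finally show ?thesis
    by (simp add: Suc)
qed simp

lemma prod_off_diagonal_symmetric:
  fixes h :: "nat \<Rightarrow> nat \<Rightarrow> 'a :: comm_monoid_mult" and p :: nat
  assumes "\<And>j k. h j k = h k j"
  shows "(\<Prod>i<p. \<Prod>j\<in>{..<p}-{i}. h i j) = (\<Prod>j<p. \<Prod>k\<in>{j<..<p}. h j k) ^ 2"
proof -
  have split: "{..<p} - {i} = {..<i} \<union> {i<..<p}" if "i < p" for i
    using that by auto
  have "(\<Prod>i<p. \<Prod>j\<in>{..<p}-{i}. h i j) = (\<Prod>i<p. (\<Prod>j<i. h i j) * (\<Prod>j\<in>{i<..<p}. h i j))"
    by (intro prod.cong refl) (simp add: split, intro prod.union_disjoint, auto)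
  also have "\<dots> = (\<Prod>i<p. \<Prod>j<i. h i j) * (\<Prod>j<p. \<Prod>k\<in>{j<..<p}. h j k)"
    by (simp add: prod.distrib)
  also have "(\<Prod>i<p. \<Prod>j<i. h i j) = (\<Prod>j<p. \<Prod>k\<in>{j<..<p}. h j k)"
    by (simp add: prod_lessThan_triangle_swap assms)
  finally show ?thesis
    by (simp add: power2_eq_square)
qed

lemma prod_pairs_le_star_sum:
  fixes d :: "nat \<Rightarrow> real" and h :: "nat \<Rightarrow> nat \<Rightarrow> real" and p :: nat
  assumes d: "\<And>j. 0 \<le> d j" and h: "\<And>j k. 0 \<le> h j k" and h_sym: "\<And>j k. h j k = h k j"
  defines "c \<equiv> (real p + 1) / 2"
  shows "(\<Prod>j<p. d j) * (\<Prod>j<p. \<Prod>k\<in>{j<..<p}. h j k)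
    \<le> (\<Prod>j<p. d j) powr c + (\<Sum>i<p. (d i * (\<Prod>j\<in>{..<p}-{i}. h i j)) powr c)"
proof -
  define A where "A = (\<Prod>j<p. d j)"
  define B where "B = (\<Prod>j<p. \<Prod>k\<in>{j<..<p}. h j k)"
  define x where "x i = (if i = p then A powr c else (d i * (\<Prod>j\<in>{..<p}-{i}. h i j)) powr c)" for i
  have "0 \<le> A * B"
    unfolding A_def B_def using d h by (simp add: prod_nonneg)
  have "(\<Prod>i<Suc p. x i) = (\<Prod>i<p. (d i * (\<Prod>j\<in>{..<p}-{i}. h i j)) powr c) * A powr c"
    by (simp add: x_def)
  also have "\<dots> = (A * B\<^sup>2 * A) powr c"
  proof -
    have "(\<Prod>i<p. d i * (\<Prod>j\<in>{..<p}-{i}. h i j)) = A * B\<^sup>2"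
      by (simp add: A_def B_def prod.distrib prod_off_diagonal_symmetric[of h, OF h_sym])
    then show ?thesis
      by (simp flip: prod_powr_distrib powr_mult)
  qed
  also have "\<dots> = ((A * B) powr 2) powr c"
    using \<open>0 \<le> A * B\<close> by (simp add: power2_eq_square ac_simps)
  also have "\<dots> = (A * B) powr real (Suc p)"
    unfolding powr_powr c_def by (simp add: add_divide_distrib add.commute)
  also have "\<dots> = (A * B) ^ card {..<Suc p}"
    using \<open>0 \<le> A * B\<close> by (simp only: card_lessThan powr_realpow' Suc_neq_Zero)
  finally have "A * B \<le> (\<Sum>i<Suc p. x i)"
    using \<open>0 \<le> A * B\<close> d h
    by (intro le_sum_if_power_card_eq_prod) (auto simp: x_def)
  then show ?thesis
    by (simp add: x_def A_def B_def add.commute)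
qed

lemma fker_le_star_sum:
  fixes a :: real and p :: nat
  defines "b \<equiv> a * (real p + 1) / 2"
  shows "fker a p z \<le> (\<Prod>j<p. l1n (z j) powr (-b))
    + (\<Sum>i<p. l1n (z i) powr (-b) * (\<Prod>j\<in>{..<p}-{i}. l1n (z i - z j) powr (-b)))"
proof -
  define c where "c = (real p + 1) / 2"
  have pow: "(x powr (-a)) powr c = x powr (-b)" for x
    by (simp add: powr_powr b_def c_def)
  have sym: "l1n (z j - z k) powr (-a) = l1n (z k - z j) powr (-a)" for j k
    by (simp add: l1n_def abs_minus_commute)
  have "fker a p z \<le> (\<Prod>j<p. l1n (z j) powr (-a)) powr c
      + (\<Sum>i<p. (l1n (z i) powr (-a) * (\<Prod>j\<in>{..<p}-{i}. l1n (z i - z j) powr (-a))) powr c)"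
    unfolding fker_def c_def by (rule prod_pairs_le_star_sum) (simp_all add: sym)
  then show ?thesis
    by (simp add: prod_powr_distrib powr_mult pow)
qed

lemma l1n_uminus [simp]: "l1n (- v) = l1n v"
  by (simp add: l1n_def)

lemma l1n_triangle: "l1n (v + w) \<le> l1n v + l1n w"
  by (simp add: l1n_def abs_triangle_ineq add_mono)

lemma borel_measurable_l1n [measurable]: "l1n \<in> borel_measurable borel"
  unfolding l1n_def by (intro borel_measurable_continuous_onI continuous_intros)

lemma l1ball_sets [measurable]: "l1ball r \<in> sets borel"
  unfolding l1ball_def by measurable

definition riesz_on_ball :: "real \<Rightarrow> real \<Rightarrow> real \<times> real \<Rightarrow> real \<times> real \<Rightarrow> ennreal" where
  "riesz_on_ball r b y u = ennreal (l1n (y - u) powr (-b)) * indicator (l1ball r) u"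

lemma measurable_riesz_on_ball [measurable (raw)]:
  assumes [measurable]: "f \<in> borel_measurable M" "g \<in> borel_measurable M"
  shows "(\<lambda>x. riesz_on_ball r b (f x) (g x)) \<in> borel_measurable M"
  unfolding riesz_on_ball_def by measurable

lemma nn_integral_abs_powr_Icc_finite:
  fixes c R :: real
  assumes "0 \<le> c" "c < 1" "0 \<le> R"
  shows "(\<integral>\<^sup>+ s. ennreal (\<bar>s\<bar> powr (-c)) * indicator {-R..R} s \<partial>lborel) < \<infinity>"
proof -
  define I where "I = R powr (1 - c) / (1 - c)"
  have right: "((\<lambda>s. \<bar>s\<bar> powr (-c)) has_integral I) {0..R}"
    using has_integral_powr_from_0[of "-c" R] assms
    by (subst has_integral_cong[of _ _ "\<lambda>s. s powr (-c)"]) (simp_all add: I_def)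
  then have left: "((\<lambda>s. \<bar>s\<bar> powr (-c)) has_integral I) {-R..0}"
    using has_integral_reflect_real[of "\<lambda>s. \<bar>s\<bar> powr (-c)" I R 0] by simp
  have "((\<lambda>s. \<bar>s\<bar> powr (-c)) has_integral I + I) {-R..R}"
    using has_integral_combine[OF _ _ left right] \<open>0 \<le> R\<close> by simp
  then show ?thesis
    by (subst nn_integral_has_integral_lebesgue') simp_all
qed

lemma l1n_powr_le_abs_powr_mult:
  fixes s t b :: real
  assumes "0 \<le> b" "s \<noteq> 0" "t \<noteq> 0"
  shows "l1n (s, t) powr (-b) \<le> \<bar>s\<bar> powr (-b/2) * \<bar>t\<bar> powr (-b/2)"
proof -
  have "l1n (s, t) powr (-b) = (l1n (s, t) ^ 2) powr (-b/2)"
    by (simp add: l1n_def powr_powr flip: powr_numeral)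
  also have "\<dots> \<le> (\<bar>s\<bar> * \<bar>t\<bar>) powr (-b/2)"
    using assms by (intro powr_mono2') (auto simp: l1n_def power2_eq_square algebra_simps)
  finally show ?thesis
    by (simp add: powr_mult)
qed

lemma nn_integral_riesz_on_ball_finite:
  assumes "0 \<le> b" "b < 2" "0 \<le> R"
  shows "(\<integral>\<^sup>+ v. riesz_on_ball R b 0 v \<partial>lborel) < \<infinity>"
proof -
  define \<phi> where "\<phi> s = ennreal (\<bar>s\<bar> powr (-b/2)) * indicator {-R..R} s" for s :: real
  have [measurable]: "\<phi> \<in> borel_measurable borel"
    unfolding \<phi>_def by measurable
  have \<phi>_finite: "(\<integral>\<^sup>+ s. \<phi> s \<partial>lborel) < \<infinity>"
    unfolding \<phi>_def using nn_integral_abs_powr_Icc_finite[of "b/2" R] assms by simp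
  \<comment> \<open>fails on the axes, where \<open>0 powr x = 0\<close>; they are null sets\<close>
  have le: "riesz_on_ball R b 0 (s, t) \<le> \<phi> s * \<phi> t" if "s \<noteq> 0" "t \<noteq> 0" for s t
  proof (cases "(s, t) \<in> l1ball R")
    case True
    then have "\<bar>s\<bar> \<le> R" "\<bar>t\<bar> \<le> R"
      by (auto simp: l1ball_def l1n_def)
    then show ?thesis
      using True l1n_powr_le_abs_powr_mult[OF \<open>0 \<le> b\<close> that]
      by (simp add: riesz_on_ball_def \<phi>_def l1n_def abs_le_iff ennreal_leI flip: ennreal_mult)
  qed (simp add: riesz_on_ball_def)
  have "(\<integral>\<^sup>+ v. riesz_on_ball R b 0 v \<partial>lborel) = (\<integral>\<^sup>+ s. \<integral>\<^sup>+ t. riesz_on_ball R b 0 (s, t) \<partial>lborel \<partial>lborel)"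
  proof -
    have "(\<lambda>v. riesz_on_ball R b 0 v) \<in> borel_measurable (lborel \<Otimes>\<^sub>M lborel)"
      unfolding lborel_prod by measurable
    then show ?thesis
      unfolding lborel_prod[symmetric] by (rule lborel.nn_integral_fst[symmetric])
  qed
  also have "\<dots> \<le> (\<integral>\<^sup>+ s. \<integral>\<^sup>+ t. \<phi> s * \<phi> t \<partial>lborel \<partial>lborel)"
  proof (rule nn_integral_mono_AE)
    show "AE s in lborel. (\<integral>\<^sup>+ t. riesz_on_ball R b 0 (s, t) \<partial>lborel) \<le> (\<integral>\<^sup>+ t. \<phi> s * \<phi> t \<partial>lborel)"
      using AE_lborel_singleton[of 0]
    proof eventually_elim
      case (elim s)
      have "AE t in lborel. riesz_on_ball R b 0 (s, t) \<le> \<phi> s * \<phi> t"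
        using AE_lborel_singleton[of 0] by eventually_elim (rule le[OF elim])
      then show ?case
        by (rule nn_integral_mono_AE)
    qed
  qed
  also have "\<dots> = (\<integral>\<^sup>+ s. \<phi> s \<partial>lborel) * (\<integral>\<^sup>+ t. \<phi> t \<partial>lborel)"
    by (simp add: nn_integral_cmult nn_integral_multc)
  also have "\<dots> < \<infinity>"
    using \<phi>_finite by (simp add: ennreal_mult_less_top)
  finally show ?thesis .
qed

lemma nn_integral_riesz_on_ball_le:
  assumes "y \<in> l1ball r"
  shows "(\<integral>\<^sup>+ u. riesz_on_ball r b y u \<partial>lborel) \<le> (\<integral>\<^sup>+ v. riesz_on_ball (2 * r) b 0 v \<partial>lborel)"
proof -
  have "(\<integral>\<^sup>+ u. riesz_on_ball r b y u \<partial>lborel) = (\<integral>\<^sup>+ v. riesz_on_ball r b y (y + v) \<partial>lborel)"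
    by (subst lborel_distr_plus[of y, symmetric]) (simp add: nn_integral_distr)
  also have "\<dots> \<le> (\<integral>\<^sup>+ v. riesz_on_ball (2 * r) b 0 v \<partial>lborel)"
  proof (intro nn_integral_mono)
    fix v :: "real \<times> real"
    have "l1n v \<le> l1n (y + v) + l1n (- y)"
      using l1n_triangle[of "y + v" "- y"] by simp
    then have "y + v \<in> l1ball r \<Longrightarrow> v \<in> l1ball (2 * r)"
      using assms by (auto simp: l1ball_def)
    then show "riesz_on_ball r b y (y + v) \<le> riesz_on_ball (2 * r) b 0 v"
      by (auto simp: riesz_on_ball_def indicator_def)
  qed
  finally show ?thesis .
qed

lemma nn_integral_PiM_star_le:
  fixes M :: "'a measure" and e :: "'a \<Rightarrow> ennreal" and G :: "'a \<Rightarrow> 'a \<Rightarrow> ennreal"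
  assumes "sigma_finite_measure M" "finite I" "i \<in> I"
    and [measurable]: "e \<in> borel_measurable M" "case_prod G \<in> borel_measurable (M \<Otimes>\<^sub>M M)"
    and G_bound: "\<And>y. y \<in> space M \<Longrightarrow> e y \<noteq> 0 \<Longrightarrow> (\<integral>\<^sup>+ u. G y u \<partial>M) \<le> C"
  shows "(\<integral>\<^sup>+ z. e (z i) * (\<Prod>j\<in>I-{i}. G (z i) (z j)) \<partial>PiM I (\<lambda>_. M))
    \<le> (\<integral>\<^sup>+ y. e y \<partial>M) * C ^ card (I - {i})"
proof -
  interpret product_sigma_finite "\<lambda>_. M"
    using assms(1) by (simp add: product_sigma_finite_def)
  obtain J where I: "I = insert i J" "i \<notin> J" "finite J"
    using assms(2,3) by (metis Diff_iff finite_Diff insert_Diff singletonI)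
  have [measurable (raw)]: "(\<lambda>x. G (f x) (g x)) \<in> borel_measurable N"
    if "f \<in> N \<rightarrow>\<^sub>M M" "g \<in> N \<rightarrow>\<^sub>M M" for f g and N :: "'b measure"
    using measurable_compose[OF measurable_Pair[OF that], of "case_prod G"] by simp
  have G_section [measurable]: "G y \<in> borel_measurable M" if "y \<in> space M" for y
    using measurable_Pair2[of "case_prod G" M M borel y] that by simp
  have "(\<integral>\<^sup>+ z. e (z i) * (\<Prod>j\<in>J. G (z i) (z j)) \<partial>PiM (insert i J) (\<lambda>_. M))
      = (\<integral>\<^sup>+ y. \<integral>\<^sup>+ x. e y * (\<Prod>j\<in>J. G y (x j)) \<partial>PiM J (\<lambda>_. M) \<partial>M)"
  proof -
    have "j \<in> J \<Longrightarrow> j \<noteq> i" for j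
      using I by auto
    then show ?thesis
      using I by (subst product_nn_integral_insert_rev) (auto intro!: nn_integral_cong cong: prod.cong)
  qed
  also have "\<dots> \<le> (\<integral>\<^sup>+ y. e y * C ^ card J \<partial>M)"
  proof (intro nn_integral_mono)
    fix y assume y: "y \<in> space M"
    have "(\<integral>\<^sup>+ x. e y * (\<Prod>j\<in>J. G y (x j)) \<partial>PiM J (\<lambda>_. M)) = e y * (\<Prod>j\<in>J. \<integral>\<^sup>+ u. G y u \<partial>M)"
      using I y product_nn_integral_prod[of J "\<lambda>_. G y"] by (simp add: nn_integral_cmult)
    also have "\<dots> \<le> e y * C ^ card J"
      using G_bound[OF y] by (cases "e y = 0")
        (auto intro!: mult_left_mono prod_mono_ennreal simp flip: prod_constant)
    finally show "(\<integral>\<^sup>+ x. e y * (\<Prod>j\<in>J. G y (x j)) \<partial>PiM J (\<lambda>_. M)) \<le> e y * C ^ card J" .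
  qed
  also have "\<dots> = (\<integral>\<^sup>+ y. e y \<partial>M) * C ^ card J"
    by (simp add: nn_integral_multc)
  finally show ?thesis
    using I by simp
qed

lemma fker_indicator_le_riesz_star_sum:
  fixes a r :: real and p :: nat
  defines "b \<equiv> a * (real p + 1) / 2"
  shows "ennreal (fker a p z) * indicator (PiE {..<p} (\<lambda>_. l1ball r)) z
    \<le> (\<Prod>j<p. riesz_on_ball r b 0 (z j))
      + (\<Sum>i<p. riesz_on_ball r b 0 (z i) * (\<Prod>j\<in>{..<p}-{i}. riesz_on_ball r b (z i) (z j)))"
proof (cases "z \<in> PiE {..<p} (\<lambda>_. l1ball r)")
  case True
  then have ball: "riesz_on_ball r b y (z j) = ennreal (l1n (y - z j) powr (-b))" if "j < p" for y j
    using PiE_mem[OF True, of j] that by (simp add: riesz_on_ball_def)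
  have "ennreal (fker a p z) \<le> ennreal ((\<Prod>j<p. l1n (z j) powr (-b))
      + (\<Sum>i<p. l1n (z i) powr (-b) * (\<Prod>j\<in>{..<p}-{i}. l1n (z i - z j) powr (-b))))"
    unfolding b_def by (intro ennreal_leI fker_le_star_sum)
  also have "\<dots> = ennreal (\<Prod>j<p. l1n (z j) powr (-b))
      + (\<Sum>i<p. ennreal (l1n (z i) powr (-b) * (\<Prod>j\<in>{..<p}-{i}. l1n (z i - z j) powr (-b))))"
    by (simp add: sum_nonneg prod_nonneg)
  also have "\<dots> = (\<Prod>j<p. riesz_on_ball r b 0 (z j))
      + (\<Sum>i<p. riesz_on_ball r b 0 (z i) * (\<Prod>j\<in>{..<p}-{i}. riesz_on_ball r b (z i) (z j)))"
    by (simp add: ball prod_ennreal ennreal_mult prod_nonneg)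
  finally show ?thesis
    using True by simp
qed simp

lemma nn_integral_riesz_on_ball_product:
  assumes "finite I"
  shows "(\<integral>\<^sup>+ z. (\<Prod>j\<in>I. riesz_on_ball r b 0 (z j)) \<partial>PiM I (\<lambda>_. lborel))
    = (\<integral>\<^sup>+ v. riesz_on_ball r b 0 v \<partial>lborel) ^ card I"
proof -
  interpret product_sigma_finite "\<lambda>_. lborel :: (real \<times> real) measure"
    by (simp add: product_sigma_finite_def lborel.sigma_finite_measure_axioms)
  have "(\<lambda>v. riesz_on_ball r b 0 v) \<in> borel_measurable lborel"
    by measurable
  then show ?thesis
    using product_nn_integral_prod[of I "\<lambda>_ v. riesz_on_ball r b 0 v"] assms by simp
qed

lemma nn_integral_riesz_on_ball_star_finite:
  assumes "0 \<le> b" "b < 2" "0 \<le> r" "finite I" "i \<in> I"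
  shows "(\<integral>\<^sup>+ z. riesz_on_ball r b 0 (z i) * (\<Prod>j\<in>I-{i}. riesz_on_ball r b (z i) (z j))
    \<partial>PiM I (\<lambda>_. lborel)) < \<infinity>"
proof -
  have "(\<integral>\<^sup>+ z. riesz_on_ball r b 0 (z i) * (\<Prod>j\<in>I-{i}. riesz_on_ball r b (z i) (z j)) \<partial>PiM I (\<lambda>_. lborel))
      \<le> (\<integral>\<^sup>+ v. riesz_on_ball r b 0 v \<partial>lborel)
        * (\<integral>\<^sup>+ v. riesz_on_ball (2 * r) b 0 v \<partial>lborel) ^ card (I - {i})"
    using assms
    by (intro nn_integral_PiM_star_le nn_integral_riesz_on_ball_le)
      (auto simp: lborel.sigma_finite_measure_axioms riesz_on_ball_def indicator_def)
  also have "\<dots> < \<infinity>"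
    using assms nn_integral_riesz_on_ball_finite[of b r] nn_integral_riesz_on_ball_finite[of b "2 * r"]
    by (simp add: ennreal_mult_less_top power_less_top_ennreal)
  finally show ?thesis .
qed

theorem lemma6p12:
  fixes a r :: real and p :: nat
  assumes "0 < a" and "a < 2" and "real p < 4 / a - 1" and "0 < r"
  shows "(\<integral>\<^sup>+ z \<in> (PiE {..<p} (\<lambda>_. l1ball r)). ennreal (fker a p z)
            \<partial>(PiM {..<p} (\<lambda>_. (lborel :: (real \<times> real) measure)))) < \<infinity>"
proof -
  define b where "b = a * (real p + 1) / 2"
  have b: "0 \<le> b" "b < 2"
    using assms by (simp_all add: b_def field_simps)
  let ?M = "PiM {..<p} (\<lambda>_. lborel :: (real \<times> real) measure)"
  let ?K = "riesz_on_ball r b"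
  have "(\<integral>\<^sup>+ z \<in> PiE {..<p} (\<lambda>_. l1ball r). ennreal (fker a p z) \<partial>?M)
      \<le> (\<integral>\<^sup>+ z. (\<Prod>j<p. ?K 0 (z j)) + (\<Sum>i<p. ?K 0 (z i) * (\<Prod>j\<in>{..<p}-{i}. ?K (z i) (z j))) \<partial>?M)"
    unfolding b_def by (intro nn_integral_mono fker_indicator_le_riesz_star_sum)
  also have "\<dots> = (\<integral>\<^sup>+ v. ?K 0 v \<partial>lborel) ^ p
      + (\<Sum>i<p. \<integral>\<^sup>+ z. ?K 0 (z i) * (\<Prod>j\<in>{..<p}-{i}. ?K (z i) (z j)) \<partial>?M)"
    by (simp add: nn_integral_add nn_integral_sum nn_integral_riesz_on_ball_product)
  also have "\<dots> < \<infinity>"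
    using b \<open>0 < r\<close> nn_integral_riesz_on_ball_finite[of b r]
      nn_integral_riesz_on_ball_star_finite[of b r "{..<p}"]
    by (simp add: power_less_top_ennreal)
  finally show ?thesis .
qed

end
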